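(* Let $V$ be a finite set, $\mathcal{F}\subseteq 2^V$ a minimal hereditary family with $\delta(\mathcal{F})\ge 12$, and $x\in V$ with $f_3(x)=1$ and $f_1(x)=4$. Write $\mathcal{Q}(x)=\{Q\}$ with $Q=\{x,y_1,y_2,y_3\}$ and $N(x)=\{x,y_1,y_2,y_3,z\}$. Then: (1) $\mathcal{F}(x)=2^{\{y_1,y_2,y_3\}}\cup\{\{z\}\}\cup\{\{y_i,z\}: i\in[3]\}$; in particular $N(x)\subseteq N(z)$ and $N(x)\subseteq N(y_i)$ for all $i\in[3]$; (2) $c(Q)=0$; (3) $u(x)=5.3$.
   Context: Let $V$ be a finite set. A family $\mathcal{F}\subseteq 2^V$ is hereditary if $F'\subseteq F\in\mathcal{F}$ implies $F'\in\mathcal{F}$. For $x\in V$: the link is $\mathcal{F}(x)=\{F\setminus\{x\}: x\in F\in\mathcal{F}\}$, $d_{\mathcal{F}}(x)=|\mathcal{F}(x)|$, $\delta(\mathcal{F})=\min_{x\in V}d_{\mathcal{F}}(x)$, and the neighborhood is $N(x)=\bigcup_{x\in F\in\mathcal{F}}F$. For $A\subseteq V$, $d_{\mathcal{F}}(A)=|\{F\in\mathcal{F}: A\subseteq F\}|$. A set $F\in\mathcal{F}$ is maximal if no other member strictly contains it; a hereditary $\mathcal{F}$ with $\delta(\mathcal{F})\ge 12$ is minimal if $\delta(\mathcal{F}\setminus\{F\})\le 11$ for every maximal $F\in\mathcal{F}$. $f_i(x)$ denotes the number of $i$-element sets in $\mathcal{F}(x)$. A vertex $x$ is mini-weight if $f_1(x)=4$,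 $f_2(x)=5$, $f_3(x)=2$. $\mathcal{Q}=\{Q\in\mathcal{F}:|Q|=4\}$, $\mathcal{Q}(x)=\{Q\in\mathcal{Q}: x\in Q\}$, and for $Q\in\mathcal{Q}$, $c(Q)$ is the number of mini-weight vertices in $Q$. Weights: for $x\in F\in\mathcal{F}$ define $\omega(x,F)$ as follows. If $|F|\ne 3$, $\omega(x,F)=1/|F|$. If $|F|=3$: if $F$ is contained in some 4-element member of $\mathcal{F}$, every element of $F$ gets $\omega=1/3$; otherwise order the three 2-subsets of $F$ as $e_1,e_2,e_3$ with $d_{\mathcal{F}}(e_1)\le d_{\mathcal{F}}(e_2)\le d_{\mathcal{F}}(e_3)$; if $d_{\mathcal{F}}(e_2)\le 4<d_{\mathcal{F}}(e_3)$, the two elements of $e_3$ get $\omega=7/20$ and the element of $F\setminus e_3$ gets $6/20$; else if $d_{\mathcal{F}}(e_1)\le 4<d_{\mathcal{F}}(e_2)$, the two elements of $e_1$ get $7/20$ and the element of $F\setminus e_1$ gets $6/20$; otherwise every element of $F$ gets $1/3$. The weight of $x$ is $u(x)=\sum_{x\in F\in\mathcal{F}}\omega(x,F)$. *)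

theory Defs
  imports Complex_Main
begin

definition hereditary :: "'a set set \<Rightarrow> bool" where
  "hereditary \<F> \<longleftrightarrow> (\<forall>F\<in>\<F>. \<forall>F'. F' \<subseteq> F \<longrightarrow> F' \<in> \<F>)"

definition link :: "'a set set \<Rightarrow> 'a \<Rightarrow> 'a set set" where
  "link \<F> x = {F - {x} | F. F \<in> \<F> \<and> x \<in> F}"

definition deg :: "'a set set \<Rightarrow> 'a \<Rightarrow> nat" where
  "deg \<F> x = card (link \<F> x)"

text \<open>minimum degree over the ground set V (V nonempty in our use)\<close>
definition mindeg :: "'a set \<Rightarrow> 'a set set \<Rightarrow> nat" where
  "mindeg V \<F> = Min ((\<lambda>x. deg \<F> x) ` V)"

definition nbhd :: "'a set set \<Rightarrow> 'a \<Rightarrow> 'a set" where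
  "nbhd \<F> x = \<Union>{F \<in> \<F>. x \<in> F}"

definition setdeg :: "'a set set \<Rightarrow> 'a set \<Rightarrow> nat" where
  "setdeg \<F> A = card {F \<in> \<F>. A \<subseteq> F}"

definition maximal_in :: "'a set set \<Rightarrow> 'a set \<Rightarrow> bool" where
  "maximal_in \<F> F \<longleftrightarrow> F \<in> \<F> \<and> \<not> (\<exists>G\<in>\<F>. F \<subset> G)"

definition minimal_family :: "'a set \<Rightarrow> 'a set set \<Rightarrow> bool" where
  "minimal_family V \<F> \<longleftrightarrow> hereditary \<F> \<and> mindeg V \<F> \<ge> 12 \<and>
     (\<forall>F. maximal_in \<F> F \<longrightarrow> mindeg V (\<F> - {F}) \<le> 11)"

definition fnum :: "'a set set \<Rightarrow> nat \<Rightarrow> 'a \<Rightarrow> nat" where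
  "fnum \<F> i x = card {A \<in> link \<F> x. card A = i}"

definition mini_weight :: "'a set set \<Rightarrow> 'a \<Rightarrow> bool" where
  "mini_weight \<F> x \<longleftrightarrow> fnum \<F> 1 x = 4 \<and> fnum \<F> 2 x = 5 \<and> fnum \<F> 3 x = 2"

definition Qs :: "'a set set \<Rightarrow> 'a set set" where
  "Qs \<F> = {Q \<in> \<F>. card Q = 4}"

definition Qx :: "'a set set \<Rightarrow> 'a \<Rightarrow> 'a set set" where
  "Qx \<F> x = {Q \<in> Qs \<F>. x \<in> Q}"

definition cQ :: "'a set set \<Rightarrow> 'a set \<Rightarrow> nat" where
  "cQ \<F> Q = card {v \<in> Q. mini_weight \<F> v}"

definition sorted_pairs :: "'a set set \<Rightarrow> 'a set \<Rightarrow> 'a set \<Rightarrow> 'a set \<Rightarrow> 'a set \<Rightarrow> bool" where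
  "sorted_pairs \<F> F e1 e2 e3 \<longleftrightarrow>
     {e1, e2, e3} = {e. e \<subseteq> F \<and> card e = 2} \<and> e1 \<noteq> e2 \<and> e1 \<noteq> e3 \<and> e2 \<noteq> e3 \<and>
     setdeg \<F> e1 \<le> setdeg \<F> e2 \<and> setdeg \<F> e2 \<le> setdeg \<F> e3"

definition omega :: "'a set set \<Rightarrow> 'a \<Rightarrow> 'a set \<Rightarrow> real" where
  "omega \<F> x F =
    (if card F \<noteq> 3 then 1 / real (card F)
     else if (\<exists>Q\<in>\<F>. card Q = 4 \<and> F \<subseteq> Q) then 1/3
     else if (\<exists>e1 e2 e3. sorted_pairs \<F> F e1 e2 e3 \<and> setdeg \<F> e2 \<le> 4 \<and> 4 < setdeg \<F> e3) then
       (if (\<exists>e1 e2 e3. sorted_pairs \<F> F e1 e2 e3 \<and> setdeg \<F> e2 \<le> 4 \<and> 4 < setdeg \<F> e3 \<and> x \<in> e3)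
        then 7/20 else 6/20)
     else if (\<exists>e1 e2 e3. sorted_pairs \<F> F e1 e2 e3 \<and> setdeg \<F> e1 \<le> 4 \<and> 4 < setdeg \<F> e2) then
       (if (\<exists>e1 e2 e3. sorted_pairs \<F> F e1 e2 e3 \<and> setdeg \<F> e1 \<le> 4 \<and> 4 < setdeg \<F> e2 \<and> x \<in> e1)
        then 7/20 else 6/20)
     else 1/3)"

definition weight :: "'a set set \<Rightarrow> 'a \<Rightarrow> real" where
  "weight \<F> x = (\<Sum>F\<in>{F \<in> \<F>. x \<in> F}. omega \<F> x F)"

end

theory Submission
  imports Defs
begin

text \<open>
  Every member of \<open>\<F>\<close> through \<open>x\<close> lies inside \<open>N(x)\<close>, and one through \<open>x\<close> and \<open>z\<close> with two
  of the \<open>y\<^sub>i\<close> would contain a second 4-set through \<open>x\<close>. So the link of \<open>x\<close> lies in the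
  twelve-element family \<open>2\<^bsup>{y\<^sub>1,y\<^sub>2,y\<^sub>3}\<^esup> \<union> {{z}} \<union> {{y\<^sub>i,z}}\<close>, and \<open>\<delta>(\<F>) \<ge> 12\<close> forces equality.
  A mini-weight \<open>y\<^sub>i\<close> would have exactly the four singletons \<open>x, y\<^sub>j, y\<^sub>k, z\<close> in its link and
  two triples, which must be \<open>{x,y\<^sub>j,y\<^sub>k}\<close> and \<open>{y\<^sub>j,y\<^sub>k,z}\<close>; but then its link has six pairs,
  not five. Finally each triangle \<open>x y\<^sub>i z\<close> lies in no 4-set while \<open>d(xy\<^sub>i) = 5 > 4 \<ge> d(xz)\<close>, so
  \<open>x\<close> gets \<open>7/20\<close> from it, and \<open>u(x) = 1 + 4\<cdot>1/2 + 3\<cdot>1/3 + 1/4 + 3\<cdot>7/20 = 5.3\<close>.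
\<close>

lemma mem_link_iff: "A \<in> link \<F> x \<longleftrightarrow> x \<notin> A \<and> insert x A \<in> \<F>"
  unfolding link_def by (auto simp: insert_absorb)

lemma hereditaryD: "hereditary \<F> \<Longrightarrow> G \<in> \<F> \<Longrightarrow> H \<subseteq> G \<Longrightarrow> H \<in> \<F>"
  unfolding hereditary_def by blast

lemma hereditary_link_memI:
  "hereditary \<F> \<Longrightarrow> B \<in> \<F> \<Longrightarrow> y \<notin> A \<Longrightarrow> insert y A \<subseteq> B \<Longrightarrow> A \<in> link \<F> y"
  unfolding mem_link_iff by (blast intro: hereditaryD)

lemma sets_containing_eq_image_link: "{G \<in> \<F>. x \<in> G} = insert x ` link \<F> x"
proof (intro equalityI subsetI)
  fix G assume "G \<in> {G \<in> \<F>. x \<in> G}"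
  then have "G - {x} \<in> link \<F> x" and "G = insert x (G - {x})"
    by (auto simp: mem_link_iff insert_absorb)
  then show "G \<in> insert x ` link \<F> x" by blast
qed (auto simp: mem_link_iff)

lemma inj_on_insert_link: "inj_on (insert x) (link \<F> x)"
  by (rule inj_onI) (metis Diff_insert_absorb mem_link_iff)

lemma weight_eq_sum_link: "weight \<F> x = (\<Sum>A\<in>link \<F> x. omega \<F> x (insert x A))"
  unfolding weight_def sets_containing_eq_image_link
  by (simp add: sum.reindex[OF inj_on_insert_link])

lemma setdeg_insert_eq_card_link:
  assumes "x \<notin> B"
  shows "setdeg \<F> (insert x B) = card {A \<in> link \<F> x. B \<subseteq> A}"
proof -
  have "{G \<in> \<F>. insert x B \<subseteq> G} = {G \<in> insert x ` link \<F> x. B \<subseteq> G}"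
    using sets_containing_eq_image_link[of \<F> x] by blast
  also have "\<dots> = insert x ` {A \<in> link \<F> x. B \<subseteq> A}"
    using assms by blast
  moreover have "inj_on (insert x) {A \<in> link \<F> x. B \<subseteq> A}"
    using inj_on_insert_link by (rule inj_on_subset) blast
  ultimately show ?thesis
    unfolding setdeg_def by (simp add: card_image)
qed

lemma mindeg_le_deg: "finite V \<Longrightarrow> x \<in> V \<Longrightarrow> mindeg V \<F> \<le> deg \<F> x"
  unfolding mindeg_def by simp

lemma Qx_eq_singletonD:
  assumes "Qx \<F> x = {Q}"
  shows Qx_singleton_mem: "Q \<in> \<F>"
    and Qx_singleton_unique: "G \<in> \<F> \<Longrightarrow> x \<in> G \<Longrightarrow> card G = 4 \<Longrightarrow> G = Q"
  using assms unfolding Qx_def Qs_def by blast+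

lemma length_le_card_if_distinct: "finite S \<Longrightarrow> distinct xs \<Longrightarrow> set xs \<subseteq> S \<Longrightarrow> length xs \<le> card S"
  by (metis card_mono distinct_card)

lemma omega_of_card_ne_3: "card F \<noteq> 3 \<Longrightarrow> omega \<F> x F = 1 / real (card F)"
  unfolding omega_def by simp

lemma omega_of_sub_K4:
  "card F = 3 \<Longrightarrow> Q \<in> \<F> \<Longrightarrow> card Q = 4 \<Longrightarrow> F \<subseteq> Q \<Longrightarrow> omega \<F> x F = 1/3"
  unfolding omega_def by auto

lemma sorted_pairs_triangle_iff:
  assumes "distinct [x, y, z]"
  shows "sorted_pairs \<F> {x, y, z} e1 e2 e3 \<longleftrightarrow>
    {e1, e2, e3} = {{x, y}, {x, z}, {y, z}} \<and> distinct [e1, e2, e3] \<and>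
    setdeg \<F> e1 \<le> setdeg \<F> e2 \<and> setdeg \<F> e2 \<le> setdeg \<F> e3"
proof -
  have "{e. e \<subseteq> {x, y, z} \<and> card e = 2} = {{x, y}, {x, z}, {y, z}}"
    using assms by (auto simp: card_2_iff)
  then show ?thesis
    unfolding sorted_pairs_def by auto
qed

lemma sorted_pairs_triangleI:
  assumes "distinct [x, y, z]" and "{e1, e2, e3} = {{x, y}, {x, z}, {y, z}}" "distinct [e1, e2, e3]"
    and "setdeg \<F> e1 \<le> setdeg \<F> e2" "setdeg \<F> e2 \<le> setdeg \<F> e3"
  shows "sorted_pairs \<F> {x, y, z} e1 e2 e3"
  using assms by (simp only: sorted_pairs_triangle_iff)

lemma triangle_pairs_ne:
  "distinct [x, y, z] \<Longrightarrow> {x, y} \<noteq> {x, z} \<and> {x, y} \<noteq> {y, z} \<and> {x, z} \<noteq> {y, z}"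
  by (auto simp: doubleton_eq_iff)

lemma omega_unique_heavy_pair:
  assumes xyz: "distinct [x, y, z]"
    and no_K4: "\<not> (\<exists>Q\<in>\<F>. card Q = 4 \<and> {x, y, z} \<subseteq> Q)"
    and deg: "4 < setdeg \<F> {x, y}" "setdeg \<F> {x, z} \<le> 4" "setdeg \<F> {y, z} \<le> 4"
  shows "omega \<F> x {x, y, z} = 7/20"
proof -
  have "\<exists>e1 e2. sorted_pairs \<F> {x, y, z} e1 e2 {x, y} \<and> setdeg \<F> e2 \<le> 4"
  proof (cases "setdeg \<F> {x, z} \<le> setdeg \<F> {y, z}")
    case True
    then show ?thesis
      using deg triangle_pairs_ne[OF xyz]
      by (intro exI[of _ "{x, z}"] exI[of _ "{y, z}"] conjI sorted_pairs_triangleI[OF xyz]; (blast | auto))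
  next
    case False
    then show ?thesis
      using deg triangle_pairs_ne[OF xyz]
      by (intro exI[of _ "{y, z}"] exI[of _ "{x, z}"] conjI sorted_pairs_triangleI[OF xyz]; (blast | auto))
  qed
  then have "\<exists>e1 e2 e3. sorted_pairs \<F> {x, y, z} e1 e2 e3 \<and> setdeg \<F> e2 \<le> 4 \<and> 4 < setdeg \<F> e3 \<and> x \<in> e3"
    using deg(1) by blast
  with xyz no_K4 show ?thesis
    unfolding omega_def by auto
qed

lemma omega_unique_light_pair:
  assumes xyz: "distinct [x, y, z]"
    and no_K4: "\<not> (\<exists>Q\<in>\<F>. card Q = 4 \<and> {x, y, z} \<subseteq> Q)"
    and deg: "4 < setdeg \<F> {x, y}" "setdeg \<F> {x, z} \<le> 4" "4 < setdeg \<F> {y, z}"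
  shows "omega \<F> x {x, y, z} = 7/20"
proof -
  \<comment> \<open>The first weighting rule needs two pairs of degree at most 4.\<close>
  have "\<not> (\<exists>e1 e2 e3. sorted_pairs \<F> {x, y, z} e1 e2 e3 \<and> setdeg \<F> e2 \<le> 4 \<and> 4 < setdeg \<F> e3)"
  proof
    assume "\<exists>e1 e2 e3. sorted_pairs \<F> {x, y, z} e1 e2 e3 \<and> setdeg \<F> e2 \<le> 4 \<and> 4 < setdeg \<F> e3"
    then obtain e1 e2 e3 where sorted: "sorted_pairs \<F> {x, y, z} e1 e2 e3" "setdeg \<F> e2 \<le> 4"
      by blast
    then have pairs: "{e1, e2, e3} = {{x, y}, {x, z}, {y, z}}" and "e1 \<noteq> e2"
      and "setdeg \<F> e1 \<le> 4"
      unfolding sorted_pairs_triangle_iff[OF xyz] by auto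
    have only_light: "e = {x, z}" if "e \<in> {{x, y}, {x, z}, {y, z}}" "setdeg \<F> e \<le> 4" for e
      using that deg(1,3) by auto
    have "e1 = {x, z}" "e2 = {x, z}"
      using pairs \<open>setdeg \<F> e1 \<le> 4\<close> sorted(2) by (metis insertCI only_light)+
    with \<open>e1 \<noteq> e2\<close> show False
      by simp
  qed
  moreover have "\<exists>e2 e3. sorted_pairs \<F> {x, y, z} {x, z} e2 e3 \<and> 4 < setdeg \<F> e2"
  proof (cases "setdeg \<F> {x, y} \<le> setdeg \<F> {y, z}")
    case True
    then show ?thesis
      using deg triangle_pairs_ne[OF xyz]
      by (intro exI[of _ "{x, y}"] exI[of _ "{y, z}"] conjI sorted_pairs_triangleI[OF xyz]; (blast | auto))
  next
    case False
    then show ?thesis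
      using deg triangle_pairs_ne[OF xyz]
      by (intro exI[of _ "{y, z}"] exI[of _ "{x, y}"] conjI sorted_pairs_triangleI[OF xyz]; (blast | auto))
  qed
  then have "\<exists>e1 e2 e3. sorted_pairs \<F> {x, y, z} e1 e2 e3 \<and> setdeg \<F> e1 \<le> 4 \<and> 4 < setdeg \<F> e2 \<and> x \<in> e1"
    using deg(2) by blast
  ultimately show ?thesis
    using xyz no_K4 unfolding omega_def by auto
qed

lemma omega_heavy_light:
  assumes "distinct [x, y, z]" "\<not> (\<exists>Q\<in>\<F>. card Q = 4 \<and> {x, y, z} \<subseteq> Q)"
    and "4 < setdeg \<F> {x, y}" "setdeg \<F> {x, z} \<le> 4"
  shows "omega \<F> x {x, y, z} = 7/20"
proof (cases "setdeg \<F> {y, z} \<le> 4")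
  case True
  with assms show ?thesis by (rule omega_unique_heavy_pair)
next
  case False
  with assms show ?thesis by (intro omega_unique_light_pair) auto
qed

lemma card_link_Diff_outside_K4_le_1:
  assumes her: "hereditary \<F>" and Q: "Qx \<F> x = {Q}" and "z \<notin> Q" "x \<noteq> z"
    and A: "A \<in> link \<F> x" "z \<in> A"
  shows "card (A - {z}) \<le> 1"
proof (rule ccontr)
  assume "\<not> card (A - {z}) \<le> 1"
  then obtain B where B: "B \<subseteq> A - {z}" "card B = 2" "finite B"
    using obtain_subset_with_card_n[of 2 "A - {z}"] by auto
  have "x \<notin> A" and A_mem: "insert x A \<in> \<F>"
    using A(1) by (simp_all add: mem_link_iff)
  with B \<open>x \<noteq> z\<close> have "card (insert x (insert z B)) = 4"
    by (auto simp: card_insert_if)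
  moreover have "insert x (insert z B) \<in> \<F>"
    using A(2) B(1) by (intro hereditaryD[OF her A_mem]) auto
  ultimately have "insert x (insert z B) = Q"
    using Qx_singleton_unique[OF Q] by blast
  with \<open>z \<notin> Q\<close> show False by auto
qed

lemma link_subset_of_unique_K4:
  assumes her: "hereditary \<F>"
    and Q: "Qx \<F> x = {{x, y1, y2, y3}}" and N: "nbhd \<F> x = {x, y1, y2, y3, z}"
    and dist: "distinct [x, y1, y2, y3, z]"
  shows "link \<F> x \<subseteq> Pow {y1, y2, y3} \<union> {{z}} \<union> {{y1, z}, {y2, z}, {y3, z}}"
proof
  fix A assume A: "A \<in> link \<F> x"
  then have "x \<notin> A" and "insert x A \<subseteq> nbhd \<F> x"
    unfolding nbhd_def by (auto simp: mem_link_iff)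
  then have A_sub: "A \<subseteq> {y1, y2, y3, z}"
    using N by auto
  show "A \<in> Pow {y1, y2, y3} \<union> {{z}} \<union> {{y1, z}, {y2, z}, {y3, z}}"
  proof (cases "z \<in> A")
    case False
    with A_sub show ?thesis by blast
  next
    case True
    have Az: "A - {z} \<subseteq> {y1, y2, y3}"
      using A_sub by auto
    then have "finite (A - {z})"
      by (rule finite_subset) simp
    moreover have "card (A - {z}) \<le> 1"
      using her Q _ _ A True by (rule card_link_Diff_outside_K4_le_1) (use dist in auto)
    ultimately consider "A - {z} = {}" | w where "A - {z} = {w}"
      by (metis One_nat_def card_0_eq card_1_singletonE le_Suc_eq le_zero_eq)
    then show ?thesis
    proof cases
      case 1
      with True have "A = {z}" by blast
      then show ?thesis by blast
    next
      case (2 w)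
      with True Az have "A = {w, z}" "w \<in> {y1, y2, y3}" by auto
      then show ?thesis by blast
    qed
  qed
qed

lemma link_eq_of_unique_K4:
  assumes her: "hereditary \<F>" and deg: "12 \<le> deg \<F> x"
    and Q: "Qx \<F> x = {{x, y1, y2, y3}}" and N: "nbhd \<F> x = {x, y1, y2, y3, z}"
    and dist: "distinct [x, y1, y2, y3, z]"
  shows "link \<F> x = Pow {y1, y2, y3} \<union> {{z}} \<union> {{y1, z}, {y2, z}, {y3, z}}" (is "_ = ?U")
proof -
  let ?Us = "[{}, {y1}, {y2}, {y3}, {y1, y2}, {y1, y3}, {y2, y3}, {y1, y2, y3},
    {z}, {y1, z}, {y2, z}, {y3, z}]"
  have "?U = set ?Us"
    by (auto simp: Pow_insert)
  then have "card ?U \<le> length ?Us"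
    by (simp only: card_length)
  then have "card ?U \<le> deg \<F> x"
    using deg by simp
  with link_subset_of_unique_K4[OF her Q N dist] show ?thesis
    unfolding deg_def by (intro card_seteq) auto
qed

lemma link_triples_of_unique_K4:
  assumes Q: "Qx \<F> x = {{x, y, a, b}}" and dist: "distinct [x, y, a, b, z]"
    and support: "\<And>A. A \<in> link \<F> y \<Longrightarrow> A \<subseteq> {x, a, b, z}"
  shows "{A \<in> link \<F> y. card A = 3} \<subseteq> {{x, a, b}, {a, b, z}}"
proof
  fix A assume "A \<in> {A \<in> link \<F> y. card A = 3}"
  then have A: "A \<in> link \<F> y" "card A = 3" by auto
  \<comment> \<open>A triple through both x and z would give a second 4-set through x.\<close>
  have "\<not> {x, z} \<subseteq> A"
  proof
    assume "{x, z} \<subseteq> A"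
    moreover have "card (insert y A) = 4" "insert y A \<in> \<F>"
      using A by (auto simp: mem_link_iff card_insert_if card_ge_0_finite)
    ultimately have "insert y A = {x, y, a, b}"
      using Qx_singleton_unique[OF Q] by blast
    with \<open>{x, z} \<subseteq> A\<close> dist show False by auto
  qed
  then have "A \<subseteq> {a, b, z} \<or> A \<subseteq> {x, a, b}"
    using support[OF A(1)] by auto
  moreover have "card {a, b, z} = 3" "card {x, a, b} = 3"
    using dist by auto
  ultimately show "A \<in> {{x, a, b}, {a, b, z}}"
    using A(2) by (auto dest: card_subset_eq[rotated])
qed

lemma not_mini_weight_of_unique_K4:
  assumes her: "hereditary \<F>" and fin: "finite \<F>"
    and Q: "Qx \<F> x = {{x, y, a, b}}" and xyz: "{x, y, z} \<in> \<F>"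
    and dist: "distinct [x, y, a, b, z]"
  shows "\<not> mini_weight \<F> y"
proof
  assume "mini_weight \<F> y"
  then have f1: "card {A \<in> link \<F> y. card A = 1} = 4"
    and f2: "card {A \<in> link \<F> y. card A = 2} = 5"
    and f3: "card {A \<in> link \<F> y. card A = 3} = 2"
    unfolding mini_weight_def fnum_def by simp_all
  have fin_link: "finite (link \<F> y)"
    using fin unfolding link_def by simp
  note Q_mem = Qx_singleton_mem[OF Q]
  note in_link = hereditary_link_memI[OF her]
  have "{{x}, {a}, {b}, {z}} \<subseteq> {A \<in> link \<F> y. card A = 1}"
    using dist by (auto intro: in_link[OF Q_mem] in_link[OF xyz])
  moreover have "card {{x}, {a}, {b}, {z}} = 4"
    using dist by simp
  ultimately have singletons: "{A \<in> link \<F> y. card A = 1} = {{x}, {a}, {b}, {z}}"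
    using f1 fin_link by (intro card_subset_eq[symmetric]) auto
  have support: "A \<subseteq> {x, a, b, z}" if A: "A \<in> link \<F> y" for A
  proof
    fix w assume "w \<in> A"
    with A have "{w} \<in> link \<F> y"
      by (intro in_link[of "insert y A"]) (auto simp: mem_link_iff)
    then have "{w} \<in> {{x}, {a}, {b}, {z}}"
      unfolding singletons[symmetric] by simp
    then show "w \<in> {x, a, b, z}"
      by auto
  qed
  have triples: "{A \<in> link \<F> y. card A = 3} \<subseteq> {{x, a, b}, {a, b, z}}"
    using Q dist support by (rule link_triples_of_unique_K4)
  have "{a, b, z} \<in> link \<F> y"
  proof -
    have "{x, a, b} \<noteq> {a, b, z}"
      using dist by auto
    then have "card {{x, a, b}, {a, b, z}} = 2"
      by simp
    then have "{A \<in> link \<F> y. card A = 3} = {{x, a, b}, {a, b, z}}"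
      using card_subset_eq[OF _ triples] f3 by simp
    then show ?thesis by blast
  qed
  then have abz: "{y, a, b, z} \<in> \<F>"
    by (simp add: mem_link_iff)
  have "set [{x, a}, {x, b}, {a, b}, {x, z}, {a, z}, {b, z}] \<subseteq> {A \<in> link \<F> y. card A = 2}"
    using dist by (auto intro: in_link[OF Q_mem] in_link[OF xyz] in_link[OF abz])
  moreover have "distinct [{x, a}, {x, b}, {a, b}, {x, z}, {a, z}, {b, z}]"
    using dist by (auto simp: doubleton_eq_iff)
  ultimately have "length [{x, a}, {x, b}, {a, b}, {x, z}, {a, z}, {b, z}] \<le> card {A \<in> link \<F> y. card A = 2}"
    using fin_link by (intro length_le_card_if_distinct) auto
  with f2 show False by simp
qed

lemma omega_of_triangle_through_z:
  assumes L: "link \<F> x = Pow {y1, y2, y3} \<union> {{z}} \<union> {{y1, z}, {y2, z}, {y3, z}}"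
    and Q: "Qx \<F> x = {{x, y1, y2, y3}}" and dist: "distinct [x, y1, y2, y3, z]"
  shows "omega \<F> x {x, y1, z} = 7/20"
proof (rule omega_heavy_light)
  show "distinct [x, y1, z]"
    using dist by simp
  show "\<not> (\<exists>Q\<in>\<F>. card Q = 4 \<and> {x, y1, z} \<subseteq> Q)"
    using Qx_singleton_unique[OF Q] dist by fastforce
  have fin: "finite (link \<F> x)"
    unfolding L by simp
  have "set [{y1}, {y1, y2}, {y1, y3}, {y1, y2, y3}, {y1, z}] \<subseteq> {A \<in> link \<F> x. {y1} \<subseteq> A}"
    unfolding L by auto
  moreover have "distinct [{y1}, {y1, y2}, {y1, y3}, {y1, y2, y3}, {y1, z}]"
    using dist by (auto simp: doubleton_eq_iff insert_eq_iff)
  ultimately have "length [{y1}, {y1, y2}, {y1, y3}, {y1, y2, y3}, {y1, z}] \<le> card {A \<in> link \<F> x. {y1} \<subseteq> A}"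
    using fin by (intro length_le_card_if_distinct) auto
  then show "4 < setdeg \<F> {x, y1}"
    using dist by (simp add: setdeg_insert_eq_card_link)
  have "{A \<in> link \<F> x. {z} \<subseteq> A} \<subseteq> {{z}, {y1, z}, {y2, z}, {y3, z}}"
    unfolding L using dist by auto
  then have "card {A \<in> link \<F> x. {z} \<subseteq> A} \<le> card {{z}, {y1, z}, {y2, z}, {y3, z}}"
    by (intro card_mono) auto
  also have "\<dots> \<le> 4"
    by (rule card_insert_le_m1) (simp_all add: card_insert_le_m1)
  finally show "setdeg \<F> {x, z} \<le> 4"
    using dist by (simp add: setdeg_insert_eq_card_link)
qed

lemma weight_of_link:
  assumes L: "link \<F> x = Pow {y1, y2, y3} \<union> {{z}} \<union> {{y1, z}, {y2, z}, {y3, z}}"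
    and Q: "Qx \<F> x = {{x, y1, y2, y3}}" and dist: "distinct [x, y1, y2, y3, z]"
  shows "weight \<F> x = 53/10"
proof -
  let ?L = "[{}, {y1}, {y2}, {y3}, {y1, y2}, {y1, y3}, {y2, y3}, {y1, y2, y3},
    {z}, {y1, z}, {y2, z}, {y3, z}]"
  have L_list: "link \<F> x = set ?L"
    unfolding L by (auto simp: Pow_insert)
  have "distinct ?L"
    using dist by (auto simp: doubleton_eq_iff insert_eq_iff)
  then have weight_list: "weight \<F> x = (\<Sum>A\<leftarrow>?L. omega \<F> x (insert x A))"
    unfolding weight_eq_sum_link L_list by (rule sum.distinct_set_conv_list)
  have triangle_z: "omega \<F> x {x, y1, z} = 7/20" "omega \<F> x {x, y2, z} = 7/20"
    "omega \<F> x {x, y3, z} = 7/20"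
    using omega_of_triangle_through_z[OF L Q dist]
      omega_of_triangle_through_z[of \<F> x y2 y1 y3 z]
      omega_of_triangle_through_z[of \<F> x y3 y1 y2 z]
      L Q dist by (simp_all add: insert_commute) (metis distinct_length_2_or_more)+
  have triangle_Q: "omega \<F> x {x, a, b} = 1/3" if "{a, b} \<subseteq> {y1, y2, y3}" "a \<noteq> b" for a b
  proof (rule omega_of_sub_K4)
    show "card {x, a, b} = 3" "{x, a, b} \<subseteq> {x, y1, y2, y3}"
      using that dist by auto
    show "{x, y1, y2, y3} \<in> \<F>" "card {x, y1, y2, y3} = 4"
      using Qx_singleton_mem[OF Q] dist by auto
  qed
  have "omega \<F> x {x, y1, y2} = 1/3" "omega \<F> x {x, y1, y3} = 1/3" "omega \<F> x {x, y2, y3} = 1/3"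
    using dist by (intro triangle_Q; auto)+
  then show ?thesis
    unfolding weight_list using dist triangle_z by (simp add: omega_of_card_ne_3)
qed

theorem mainTheorem10:
  fixes V :: "'a set" and \<F> :: "'a set set" and x y1 y2 y3 z :: 'a
  assumes "finite V"
    and "\<F> \<subseteq> Pow V"
    and "minimal_family V \<F>"
    and "x \<in> V"
    and "fnum \<F> 3 x = 1"
    and "fnum \<F> 1 x = 4"
    and "Qx \<F> x = {{x, y1, y2, y3}}"
    and "nbhd \<F> x = {x, y1, y2, y3, z}"
    and "distinct [x, y1, y2, y3, z]"
  shows "link \<F> x = Pow {y1, y2, y3} \<union> {{z}} \<union> {{y1, z}, {y2, z}, {y3, z}}
         \<and> nbhd \<F> x \<subseteq> nbhd \<F> z
         \<and> (\<forall>y\<in>{y1, y2, y3}. nbhd \<F> x \<subseteq> nbhd \<F> y)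
         \<and> cQ \<F> {x, y1, y2, y3} = 0
         \<and> weight \<F> x = 53 / 10"
proof -
  note Q = assms(7) and N = assms(8) and dist = assms(9)
  have her: "hereditary \<F>" and deg: "12 \<le> deg \<F> x"
    using assms(3) mindeg_le_deg[OF assms(1,4), of \<F>] unfolding minimal_family_def by auto
  have fin: "finite \<F>"
    using assms(2) by (rule finite_subset) (simp add: assms(1))
  have L: "link \<F> x = Pow {y1, y2, y3} \<union> {{z}} \<union> {{y1, z}, {y2, z}, {y3, z}}"
    using her deg Q N dist by (rule link_eq_of_unique_K4)
  then have "{y1, z} \<in> link \<F> x" "{y2, z} \<in> link \<F> x" "{y3, z} \<in> link \<F> x"
    by auto
  then have triangles: "{x, y1, z} \<in> \<F>" "{x, y2, z} \<in> \<F>" "{x, y3, z} \<in> \<F>"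
    by (simp_all add: mem_link_iff)
  have "{x, y1, y2, y3} \<in> \<F>"
    using Q by (rule Qx_singleton_mem)
  with triangles have nbhds: "nbhd \<F> x \<subseteq> nbhd \<F> z" "\<forall>y\<in>{y1, y2, y3}. nbhd \<F> x \<subseteq> nbhd \<F> y"
    unfolding N unfolding nbhd_def by blast+
  have "\<not> mini_weight \<F> x"
    using assms(5) unfolding mini_weight_def by simp
  moreover have "\<not> mini_weight \<F> y1" "\<not> mini_weight \<F> y2" "\<not> mini_weight \<F> y3"
    using not_mini_weight_of_unique_K4[OF her fin _ triangles(1)]
      not_mini_weight_of_unique_K4[OF her fin _ triangles(2), of y1 y3]
      not_mini_weight_of_unique_K4[OF her fin _ triangles(3), of y1 y2]
      Q dist by (simp_all add: insert_commute) (metis distinct_length_2_or_more)+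
  ultimately have "cQ \<F> {x, y1, y2, y3} = 0"
    unfolding cQ_def by auto
  with L nbhds show ?thesis
    using weight_of_link[OF L Q dist] by blast
qed

end
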